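(* Let $(P,\mathcal T)$ be a hybrid program and $='$ a binary constraint predicate interpreted in every model of $\mathcal T$ as the identity relation. Suppose that in every rule $H\leftarrow C,L_1,\dots,L_n$ of $P$ all arguments of the head $H=p(s_1,\dots,s_m)$ are variables, and every variable occurs at most once in $H,L_1,\dots,L_n$ altogether (other occurrences may only be in $C$). Then $P$ is congruent w.r.t. $\mathcal T$: for every rule predicate $p$ of arity $m$ and ground terms $t_1,\dots,t_m,u_1,\dots,u_m$ with $\mathcal T\models t_1='u_1\wedge\dots\wedge t_m='u_m$, $(P,\mathcal T)\models_{\mathrm{wf}}p(\bar t)$ iff $(P,\mathcal T)\models_{\mathrm{wf}}p(\bar u)$.
   Context: Fix a first-order alphabet: a set $\mathcal F$ of function symbols containing at least one constant, a set of variables, and predicate symbols partitioned into rule predicates $\mathcal P_R$ and constraint predicates $\mathcal P_C$. An external theory $\mathcal T$ is a set of first-order axioms over $\mathcal P_C,\mathcal F$ with standard 2-valued semantics; certain formulas over $\mathcal P_C,\mathcal F$ are called constraints. A hybrid rule is $H\leftarrow C,L_1,\dots,L_n$ with $H$ a rule atom, $L_i$ rule literals, $C$ a constraint; a hybrid program is $(P,\mathcal T)$ with $P$ a set of hybrid rules. For a model $M_0$ of $\mathcal T$, $P/M_0$ is the ground normal program of all $H\theta\leftarrow L_1\theta,\dots,L_n\theta$ with $\theta$ mapping the free variables of a rule $H\leftarrow C,\bar L$ of $P$ to ground terms and $M_0\models C\theta$. $WF(Q)$ denotes the (3-valued Herbrand) well-founded model of a ground normal program $Q$. $(P,\mathcal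 T)\models_{\mathrm{wf}}F$ iff $F$ is true (3-valued) in $WF(P/M_0)$ for every model $M_0$ of $\mathcal T$. *)

theory Defs
  imports Main
begin

datatype ('f,'v) trm = Var 'v | Fn 'f "('f,'v) trm list"

fun occs :: "('f,'v) trm \<Rightarrow> 'v list" where
  "occs (Var v) = [v]"
| "occs (Fn f ts) = concat (map occs ts)"

definition ground :: "('f,'v) trm \<Rightarrow> bool" where
  "ground t \<longleftrightarrow> occs t = []"

fun tsubst :: "('v \<Rightarrow> ('f,'v) trm) \<Rightarrow> ('f,'v) trm \<Rightarrow> ('f,'v) trm" where
  "tsubst \<sigma> (Var v) = \<sigma> v"
| "tsubst \<sigma> (Fn f ts) = Fn f (map (tsubst \<sigma>) ts)"

text \<open>First-order formulas over constraint predicates 'c and function symbols 'f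
  (with equality; the remaining connectives are definable).\<close>
datatype ('c,'f,'v) fm =
    FFalse
  | FAtom 'c "('f,'v) trm list"
  | FEq "('f,'v) trm" "('f,'v) trm"
  | FImp "('c,'f,'v) fm" "('c,'f,'v) fm"
  | FAll 'v "('c,'f,'v) fm"

text \<open>Substitution of terms for free variables (capture-free when the substituted
  terms are ground, which is the only use below).\<close>
fun fsubst :: "('v \<Rightarrow> ('f,'v) trm) \<Rightarrow> ('c,'f,'v) fm \<Rightarrow> ('c,'f,'v) fm" where
  "fsubst \<sigma> FFalse = FFalse"
| "fsubst \<sigma> (FAtom c ts) = FAtom c (map (tsubst \<sigma>) ts)"
| "fsubst \<sigma> (FEq s t) = FEq (tsubst \<sigma> s) (tsubst \<sigma> t)"
| "fsubst \<sigma> (FImp \<phi> \<psi>) = FImp (fsubst \<sigma> \<phi>) (fsubst \<sigma> \<psi>)"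
| "fsubst \<sigma> (FAll x \<phi>) = FAll x (fsubst (\<sigma>(x := Var x)) \<phi>)"

record ('f,'c,'d) struct =
  fint :: "'f \<Rightarrow> 'd list \<Rightarrow> 'd"
  pint :: "'c \<Rightarrow> 'd list \<Rightarrow> bool"

fun tval :: "('f,'c,'d) struct \<Rightarrow> ('v \<Rightarrow> 'd) \<Rightarrow> ('f,'v) trm \<Rightarrow> 'd" where
  "tval M e (Var v) = e v"
| "tval M e (Fn f ts) = fint M f (map (tval M e) ts)"

fun sat :: "('f,'c,'d) struct \<Rightarrow> ('v \<Rightarrow> 'd) \<Rightarrow> ('c,'f,'v) fm \<Rightarrow> bool" where
  "sat M e FFalse = False"
| "sat M e (FAtom c ts) = pint M c (map (tval M e) ts)"
| "sat M e (FEq s t) = (tval M e s = tval M e t)"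
| "sat M e (FImp \<phi> \<psi>) = (sat M e \<phi> \<longrightarrow> sat M e \<psi>)"
| "sat M e (FAll x \<phi>) = (\<forall>d. sat M (e(x := d)) \<phi>)"

definition is_model :: "('f,'c,'d) struct \<Rightarrow> ('c,'f,'v) fm set \<Rightarrow> bool" where
  "is_model M T \<longleftrightarrow> (\<forall>\<phi>\<in>T. \<forall>e. sat M e \<phi>)"

text \<open>Models range over all structures whose universe is the type 'd.\<close>
definition entails :: "'d itself \<Rightarrow> ('c,'f,'v) fm set \<Rightarrow> ('c,'f,'v) fm \<Rightarrow> bool" where
  "entails (_::'d itself) T \<phi> \<longleftrightarrow>
     (\<forall>M::('f,'c,'d) struct. is_model M T \<longrightarrow> (\<forall>e. sat M e \<phi>))"

type_synonym ('p,'f,'v) ratom = "'p \<times> ('f,'v) trm list"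

datatype ('p,'f,'v) lit = Pos "('p,'f,'v) ratom" | Neg "('p,'f,'v) ratom"

fun lit_occs :: "('p,'f,'v) lit \<Rightarrow> 'v list" where
  "lit_occs (Pos a) = concat (map occs (snd a))"
| "lit_occs (Neg a) = concat (map occs (snd a))"

fun asubst :: "('v \<Rightarrow> ('f,'v) trm) \<Rightarrow> ('p,'f,'v) ratom \<Rightarrow> ('p,'f,'v) ratom" where
  "asubst \<sigma> (p, ts) = (p, map (tsubst \<sigma>) ts)"

fun lsubst :: "('v \<Rightarrow> ('f,'v) trm) \<Rightarrow> ('p,'f,'v) lit \<Rightarrow> ('p,'f,'v) lit" where
  "lsubst \<sigma> (Pos a) = Pos (asubst \<sigma> a)"
| "lsubst \<sigma> (Neg a) = Neg (asubst \<sigma> a)"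

datatype ('p,'c,'f,'v) hrule =
  HRule (hd_of: "('p,'f,'v) ratom") (con_of: "('c,'f,'v) fm") (body_of: "('p,'f,'v) lit list")

type_synonym ('p,'f,'v) grule = "('p,'f,'v) ratom \<times> ('p,'f,'v) lit list"

definition ground_subst :: "('v \<Rightarrow> ('f,'v) trm) \<Rightarrow> bool" where
  "ground_subst \<sigma> \<longleftrightarrow> (\<forall>v. ground (\<sigma> v))"

definition inst_prog :: "('p,'c,'f,'v) hrule set \<Rightarrow> ('f,'c,'d) struct \<Rightarrow> ('p,'f,'v) grule set" where
  "inst_prog P M =
     {(asubst \<sigma> (hd_of r), map (lsubst \<sigma>) (body_of r)) | r \<sigma>.
        r \<in> P \<and> ground_subst \<sigma> \<and> (\<forall>e. sat M e (fsubst \<sigma> (con_of r)))}"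

definition gamma :: "('p,'f,'v) grule set \<Rightarrow> ('p,'f,'v) ratom set \<Rightarrow> ('p,'f,'v) ratom set" where
  "gamma Q I = lfp (\<lambda>S. {h. \<exists>b. (h, b) \<in> Q \<and>
       (\<forall>l\<in>set b. case l of Pos a \<Rightarrow> a \<in> S | Neg a \<Rightarrow> a \<notin> I)})"

definition wf_true :: "('p,'f,'v) grule set \<Rightarrow> ('p,'f,'v) ratom set" where
  "wf_true Q = lfp (\<lambda>I. gamma Q (gamma Q I))"

definition wf_false :: "('p,'f,'v) grule set \<Rightarrow> ('p,'f,'v) ratom set" where
  "wf_false Q = - gamma Q (wf_true Q)"

definition wf_entails :: "'d itself \<Rightarrow> ('p,'c,'f,'v) hrule set \<Rightarrow> ('c,'f,'v) fm set
    \<Rightarrow> ('p,'f,'v) ratom \<Rightarrow> bool" where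
  "wf_entails (_::'d itself) P T a \<longleftrightarrow>
     (\<forall>M::('f,'c,'d) struct. is_model M T \<longrightarrow> a \<in> wf_true (inst_prog P M))"

end

theory Submission
  imports Defs
begin

text \<open>
  Fix a model M of T.  Because every rule head consists of distinct
  variables that occur nowhere else except in the constraint, any ground instance
  ((p, ts), b) of a rule in P/M can be re-instantiated on the head variables alone to
  give ((p, us), b), provided the ground terms us denote the same elements of M as ts:
  the body is untouched and the constraint keeps its truth value.  So in P/M the atoms
  (p, ts) and (p, us) are heads of exactly the same bodies.  The operator gamma, and
  hence the well-founded true set, only sees an atom through the bodies it heads, so
  (p, ts) is well-founded true iff (p, us) is.  Since the constraint predicate eq is
  the identity in every model, entailment of ts ! i eq us ! i yields equal values in
  every model, and the equations are symmetric, which gives both directions.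
\<close>

lemma tsubst_cong: "(\<forall>v\<in>set (occs t). \<sigma> v = \<sigma>' v) \<Longrightarrow> tsubst \<sigma> t = tsubst \<sigma>' t"
  by (induction t) auto

lemma lsubst_cong: "(\<forall>v\<in>set (lit_occs l). \<sigma> v = \<sigma>' v) \<Longrightarrow> lsubst \<sigma> l = lsubst \<sigma>' l"
  by (cases l) (auto intro!: tsubst_cong)

lemma tval_tsubst_cong:
  assumes "\<forall>v e. tval M e (\<sigma> v) = tval M e (\<sigma>' v)"
  shows "tval M e (tsubst \<sigma> t) = tval M e (tsubst \<sigma>' t)"
  using assms by (induction t) (auto cong: map_cong)

text \<open>Hence so does the truth of a substituted formula; this keeps a rule's constraint
  satisfied when its head variables are replaced by terms with the same values.\<close>
lemma sat_fsubst_cong: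
  assumes "\<forall>v e. tval M e (\<sigma> v) = tval M e (\<sigma>' v)"
  shows "sat M e (fsubst \<sigma> \<phi>) = sat M e (fsubst \<sigma>' \<phi>)"
  using assms
proof (induction \<phi> arbitrary: \<sigma> \<sigma>' e)
  case (FAtom c ts)
  then show ?case using tval_tsubst_cong[OF FAtom] by (simp cong: map_cong)
next
  case (FEq s t)
  then show ?case using tval_tsubst_cong[OF FEq] by simp
next
  case (FAll x \<phi>)
  then have "\<forall>v e. tval M e ((\<sigma>(x := Var x)) v) = tval M e ((\<sigma>'(x := Var x)) v)"
    by simp
  then have "\<And>e. sat M e (fsubst (\<sigma>(x := Var x)) \<phi>) = sat M e (fsubst (\<sigma>'(x := Var x)) \<phi>)"
    using FAll.IH by blast
  then show ?case by simp
next
  case (FImp \<phi> \<psi>)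
  show ?case using FImp.IH(1)[OF FImp.prems] FImp.IH(2)[OF FImp.prems] by simp
qed simp

text \<open>Overriding a substitution on a list of variables vs by a list of terms us; used
  to move a rule instance to a new head while leaving all other variables unchanged.\<close>
definition override :: "('v \<Rightarrow> ('f,'v) trm) \<Rightarrow> 'v list \<Rightarrow> ('f,'v) trm list \<Rightarrow> 'v \<Rightarrow> ('f,'v) trm"
  where "override \<sigma> vs us v = (case map_of (zip vs us) v of Some t \<Rightarrow> t | None \<Rightarrow> \<sigma> v)"

lemma override_outside:
  assumes "length vs = length us" and "v \<notin> set vs"
  shows "override \<sigma> vs us v = \<sigma> v"
proof -
  have "map_of (zip vs us) v = None" using assms by simp
  then show ?thesis by (simp add: override_def)
qed

lemma override_nth:
  "distinct vs \<Longrightarrow> length vs = length us \<Longrightarrow> i < length vs \<Longrightarrow> override \<sigma> vs us (vs ! i) = us ! i"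
  by (simp add: override_def map_of_zip_nth)

lemma map_override: "distinct vs \<Longrightarrow> length vs = length us \<Longrightarrow> map (override \<sigma> vs us) vs = us"
  by (simp add: list_eq_iff_nth_eq override_nth)

lemma ground_subst_override:
  assumes "ground_subst \<sigma>" and "list_all ground us" and "length vs = length us"
  shows "ground_subst (override \<sigma> vs us)"
  unfolding ground_subst_def
proof
  fix v
  show "ground (override \<sigma> vs us v)"
  proof (cases "map_of (zip vs us) v")
    case (Some t)
    then have "t \<in> set us" by (auto dest: map_of_SomeD set_zip_rightD)
    then show ?thesis using Some assms(2) by (simp add: override_def list_all_iff)
  qed (use assms(1) in \<open>simp add: override_def ground_subst_def\<close>)
qed

lemma tval_override:
  assumes "distinct vs" and "length vs = length us"
    and same_val: "\<forall>i<length vs. \<forall>e. tval M e (\<sigma> (vs ! i)) = tval M e (us ! i)"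
  shows "tval M e (\<sigma> v) = tval M e (override \<sigma> vs us v)"
proof (cases "v \<in> set vs")
  case True
  then obtain i where "i < length vs" "v = vs ! i" by (metis in_set_conv_nth)
  then show ?thesis using same_val override_nth[OF assms(1,2)] by auto
qed (use assms(2) in \<open>simp add: override_outside\<close>)

lemma all_vars_eq_map_Var:
  "\<forall>s\<in>set ss. \<exists>v. s = Var v \<Longrightarrow> ss = map Var (concat (map occs ss))"
  by (induction ss) auto

lemma inst_prog_head_replace:
  assumes head_vars: "\<forall>r\<in>P. \<forall>s\<in>set (snd (hd_of r)). \<exists>v. s = Var v"
    and linear: "\<forall>r\<in>P. distinct (concat (map occs (snd (hd_of r))) @ concat (map lit_occs (body_of r)))"
    and inst: "((p, ts), b) \<in> inst_prog P M"
    and len: "length us = length ts" and gr: "list_all ground us"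
    and same_val: "\<forall>i<length ts. \<forall>e. tval M e (ts ! i) = tval M e (us ! i)"
  shows "((p, us), b) \<in> inst_prog P M"
proof -
  obtain r \<sigma> where r: "r \<in> P" and gs: "ground_subst \<sigma>"
    and con: "\<forall>e. sat M e (fsubst \<sigma> (con_of r))"
    and hd: "(p, ts) = asubst \<sigma> (hd_of r)" and b: "b = map (lsubst \<sigma>) (body_of r)"
    using inst unfolding inst_prog_def by blast
  obtain ss where hr: "hd_of r = (p, ss)" using hd by (cases "hd_of r") auto
  define vs where "vs = concat (map occs ss)"
  have ss: "ss = map Var vs"
    using head_vars r hr all_vars_eq_map_Var unfolding vs_def by fastforce
  have dist: "distinct vs" and body_fresh: "\<forall>l\<in>set (body_of r). set (lit_occs l) \<inter> set vs = {}"
    using linear r hr unfolding vs_def by fastforce+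
  have ts: "ts = map \<sigma> vs" using hd hr ss by auto
  have lvs: "length vs = length us" using len ts by simp
  define \<sigma>' where "\<sigma>' = override \<sigma> vs us"
  have gs': "ground_subst \<sigma>'"
    unfolding \<sigma>'_def using ground_subst_override[OF gs gr lvs] .
  have "\<forall>i<length vs. \<forall>e. tval M e (\<sigma> (vs ! i)) = tval M e (us ! i)"
    using same_val ts by simp
  then have "\<forall>v e. tval M e (\<sigma> v) = tval M e (\<sigma>' v)"
    unfolding \<sigma>'_def using tval_override[OF dist lvs] by blast
  then have con': "\<forall>e. sat M e (fsubst \<sigma>' (con_of r))"
    using con sat_fsubst_cong by blast
  have b': "b = map (lsubst \<sigma>') (body_of r)"
    unfolding b
  proof (intro map_cong[OF refl] lsubst_cong ballI)
    fix l v
    assume "l \<in> set (body_of r)" and "v \<in> set (lit_occs l)"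
    then have "v \<notin> set vs" using body_fresh by blast
    then show "\<sigma> v = \<sigma>' v" using lvs by (simp add: \<sigma>'_def override_outside)
  qed
  have hd': "(p, us) = asubst \<sigma>' (hd_of r)"
    using hr ss map_override[OF dist lvs] by (simp add: \<sigma>'_def comp_def)
  show ?thesis unfolding inst_prog_def using r gs' con' hd' b' by blast
qed

definition gamma_step :: "('p,'f,'v) grule set \<Rightarrow> ('p,'f,'v) ratom set
    \<Rightarrow> ('p,'f,'v) ratom set \<Rightarrow> ('p,'f,'v) ratom set" where
  "gamma_step Q I S = {h. \<exists>b. (h, b) \<in> Q \<and>
       (\<forall>l\<in>set b. case l of Pos a \<Rightarrow> a \<in> S | Neg a \<Rightarrow> a \<notin> I)}"

lemma gamma_lfp: "gamma Q I = lfp (gamma_step Q I)"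
  unfolding gamma_def gamma_step_def ..

lemma mono_gamma_step: "mono (gamma_step Q I)"
  by (rule monoI) (fastforce simp: gamma_step_def split: lit.splits)

text \<open>gamma is antitone, so gamma twice is monotone and wf_true is its fixpoint.\<close>
lemma gamma_antimono: "I \<subseteq> J \<Longrightarrow> gamma Q J \<subseteq> gamma Q I"
  unfolding gamma_lfp
  by (rule lfp_mono) (fastforce simp: gamma_step_def split: lit.splits)

lemma wf_true_unfold: "wf_true Q = gamma Q (gamma Q (wf_true Q))"
  unfolding wf_true_def by (rule lfp_unfold) (simp add: mono_def gamma_antimono)

lemma gamma_heads_interchange:
  assumes bodies: "\<And>b. (a, b) \<in> Q \<Longrightarrow> (a', b) \<in> Q"
    and "a \<in> gamma Q I"
  shows "a' \<in> gamma Q I"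
proof -
  have fix_eq: "gamma Q I = gamma_step Q I (gamma Q I)"
    unfolding gamma_lfp by (rule lfp_unfold[OF mono_gamma_step])
  have "a \<in> gamma_step Q I (gamma Q I)" using assms(2) fix_eq by blast
  then have "a' \<in> gamma_step Q I (gamma Q I)" using bodies by (auto simp: gamma_step_def)
  then show ?thesis using fix_eq by blast
qed

lemma wf_true_heads_interchange:
  assumes "\<And>b. (a, b) \<in> Q \<Longrightarrow> (a', b) \<in> Q"
    and "a \<in> wf_true Q"
  shows "a' \<in> wf_true Q"
  using gamma_heads_interchange[OF assms(1)] assms(2) wf_true_unfold by blast

text \<open>One direction of the theorem; the other follows by symmetry of the equations.\<close>
lemma wf_entails_congruent:
  fixes P :: "('p,'c,'f,'v) hrule set" and T :: "('c,'f,'v) fm set" and eq :: 'c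
  assumes eq_id: "\<forall>M::('f,'c,'d) struct. is_model M T \<longrightarrow> (\<forall>x y. pint M eq [x, y] \<longleftrightarrow> x = y)"
    and head_vars: "\<forall>r\<in>P. \<forall>s\<in>set (snd (hd_of r)). \<exists>v. s = Var v"
    and linear: "\<forall>r\<in>P. distinct (concat (map occs (snd (hd_of r))) @ concat (map lit_occs (body_of r)))"
    and gr: "list_all ground us" and len: "length ts = length us"
    and equal: "\<forall>i<length ts. entails TYPE('d) T (FAtom eq [ts ! i, us ! i])"
    and true_ts: "wf_entails TYPE('d) P T (p, ts)"
  shows "wf_entails TYPE('d) P T (p, us)"
  unfolding wf_entails_def
proof (intro allI impI)
  fix M :: "('f,'c,'d) struct"
  assume M: "is_model M T"
  have same_val: "\<forall>i<length ts. \<forall>e. tval M e (ts ! i) = tval M e (us ! i)"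
    using equal eq_id M unfolding entails_def by auto
  have "(p, ts) \<in> wf_true (inst_prog P M)"
    using true_ts M unfolding wf_entails_def by blast
  then show "(p, us) \<in> wf_true (inst_prog P M)"
    using wf_true_heads_interchange inst_prog_head_replace[OF head_vars linear _ len[symmetric] gr same_val]
    by blast
qed

theorem mainTheorem3:
  fixes P :: "('p,'c,'f,'v) hrule set"
    and T :: "('c,'f,'v) fm set"
    and eq :: 'c
  assumes eq_id: "\<forall>M::('f,'c,'d) struct. is_model M T \<longrightarrow> (\<forall>x y. pint M eq [x, y] \<longleftrightarrow> x = y)"
    and head_vars: "\<forall>r\<in>P. \<forall>s\<in>set (snd (hd_of r)). \<exists>v. s = Var v"
    and linear: "\<forall>r\<in>P. distinct (concat (map occs (snd (hd_of r))) @ concat (map lit_occs (body_of r)))"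
  shows "\<forall>p ts us. list_all ground ts \<and> list_all ground us \<and> length ts = length us \<and>
           (\<forall>i<length ts. entails TYPE('d) T (FAtom eq [ts ! i, us ! i])) \<longrightarrow>
           (wf_entails TYPE('d) P T (p, ts) \<longleftrightarrow> wf_entails TYPE('d) P T (p, us))"
proof (intro allI impI)
  fix p ts us
  assume "list_all ground ts \<and> list_all ground us \<and> length ts = length us \<and>
           (\<forall>i<length ts. entails TYPE('d) T (FAtom eq [ts ! i, us ! i]))"
  then have gr: "list_all ground ts" "list_all ground us" and len: "length ts = length us"
    and forth: "\<forall>i<length ts. entails TYPE('d) T (FAtom eq [ts ! i, us ! i])" by auto
  have converse: "\<forall>i<length us. entails TYPE('d) T (FAtom eq [us ! i, ts ! i])"
    using forth len eq_id unfolding entails_def by auto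
  show "wf_entails TYPE('d) P T (p, ts) \<longleftrightarrow> wf_entails TYPE('d) P T (p, us)"
    using wf_entails_congruent[OF eq_id head_vars linear gr(2) len forth]
      wf_entails_congruent[OF eq_id head_vars linear gr(1) len[symmetric] converse]
    by blast
qed

end
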